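(* Let $\alpha\in(\frac{2\pi}{3},\pi)$. Then $M_b^\|(n,\alpha)\geq 6n-O(\sqrt{n})$, i.e., there is a constant $c>0$ such that for every positive integer $n$ there exists an $\alpha$-bend multigraph on $n$ vertices with at least $6n-c\sqrt{n}$ edges.
   Context: For $\alpha\in(0,\pi)$, an $\alpha$-bend edge between points $a$ and $c$ is a polyline $(a,b,c)$ with a single bend point $b$ (not on the line $ac$) such that the interior angle of the triangle $abc$ at $b$ equals $\alpha$. An $\alpha$-bend multigraph is a multigraph embedded in the plane (vertices are distinct points; edges pairwise do not cross, meet only at common endpoints, and contain no vertex in their relative interior; parallel edges allowed) in which every edge is an $\alpha$-bend edge. $M_b^\|(n,\alpha)$ is the supremum, over all $n$-element sets $P\subset\mathbb{R}^2$, of the maximum number of edges of an $\alpha$-bend multigraph with vertex set $P$. *)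

theory Defs
  imports "HOL-Analysis.Analysis"
begin

type_synonym point = "real ^ 2"

definition angle_at :: "point \<Rightarrow> point \<Rightarrow> point \<Rightarrow> real" where
  "angle_at a b c = arccos (((a - b) \<bullet> (c - b)) / (norm (a - b) * norm (c - b)))"

text \<open>An edge is a triple (a, b, c): endpoints a, c and bend point b.\<close>
definition bend_edge :: "real \<Rightarrow> point \<times> point \<times> point \<Rightarrow> bool" where
  "bend_edge \<alpha> e = (case e of (a, b, c) \<Rightarrow>
      a \<noteq> c \<and> \<not> collinear {a, b, c} \<and> angle_at a b c = \<alpha>)"

definition polyline :: "point \<times> point \<times> point \<Rightarrow> point set" where
  "polyline e = (case e of (a, b, c) \<Rightarrow> closed_segment a b \<union> closed_segment b c)"

definition endpoints :: "point \<times> point \<times> point \<Rightarrow> point set" where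
  "endpoints e = (case e of (a, b, c) \<Rightarrow> {a, c})"

text \<open>Parallel edges
  are distinct triples with the same endpoints; a triple and its reversal describe
  the same polyline and are excluded by the non-crossing condition.\<close>
definition alpha_bend_multigraph :: "real \<Rightarrow> point set \<Rightarrow> (point \<times> point \<times> point) set \<Rightarrow> bool" where
  "alpha_bend_multigraph \<alpha> P E \<longleftrightarrow>
     finite P \<and> finite E \<and>
     (\<forall>e\<in>E. bend_edge \<alpha> e \<and> endpoints e \<subseteq> P \<and> polyline e \<inter> P \<subseteq> endpoints e) \<and>
     (\<forall>e\<in>E. \<forall>e'\<in>E. e \<noteq> e' \<longrightarrow> polyline e \<inter> polyline e' \<subseteq> endpoints e \<inter> endpoints e')"

end

theory Submission
  imports Defs
begin

text \<open>Take the \<open>m \<times> m\<close> patch of the triangular lattice with \<open>m = \<lfloor>sqrt n\<rfloor>\<close> and its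
  \<open>2 (m - 1)\<^sup>2\<close> unit triangles. Inside every unit triangle draw three edges, one along each
  side, bent towards the interior at the apex of an isosceles triangle whose apex angle is
  \<open>\<alpha>\<close>; an interior lattice segment thus carries two parallel edges, one bent into each
  adjacent triangle. Since \<open>\<alpha> > 2 pi / 3\<close>, each bent edge stays inside the triangle spanned
  by its side and the centroid, so edges meet only at lattice points. This gives
  \<open>6 (m - 1)\<^sup>2 \<ge> 6 n - 24 sqrt n\<close> edges; the remaining \<open>n - m\<^sup>2\<close> vertices are isolated.
  The combinatorics is done in lattice coordinates and transported to the plane by the
  linear map \<open>trilattice\<close>.\<close>

definition pt :: "real \<Rightarrow> real \<Rightarrow> point" where
  "pt x y = vector [x, y]"

lemma pt_nth [simp]: "pt x y $ 1 = x" "pt x y $ 2 = y"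
  by (simp_all add: pt_def)

lemma point_eq_iff: "(p::point) = p' \<longleftrightarrow> p$1 = p'$1 \<and> p$2 = p'$2"
  by (simp add: vec_eq_iff forall_2)

lemma inner_point: "(p::point) \<bullet> p' = p$1 * p'$1 + p$2 * p'$2"
  by (simp add: inner_vec_def sum_2)

definition map_edge :: "(point \<Rightarrow> point) \<Rightarrow> point \<times> point \<times> point \<Rightarrow> point \<times> point \<times> point" where
  "map_edge f = map_prod f (map_prod f f)"

definition one_bend_drawing :: "point set \<Rightarrow> (point \<times> point \<times> point) set \<Rightarrow> bool" where
  "one_bend_drawing P E \<longleftrightarrow> finite P \<and> finite E \<and>
     (\<forall>e\<in>E. endpoints e \<subseteq> P \<and> polyline e \<inter> P \<subseteq> endpoints e) \<and>
     (\<forall>e\<in>E. \<forall>e'\<in>E. e \<noteq> e' \<longrightarrow> polyline e \<inter> polyline e' \<subseteq> endpoints e \<inter> endpoints e')"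

lemma alpha_bend_multigraph_iff:
  "alpha_bend_multigraph \<alpha> P E \<longleftrightarrow> one_bend_drawing P E \<and> (\<forall>e\<in>E. bend_edge \<alpha> e)"
  by (auto simp: alpha_bend_multigraph_def one_bend_drawing_def)

lemma inj_map_edge: "inj f \<Longrightarrow> inj (map_edge f)"
  by (auto simp: map_edge_def inj_def)

lemma endpoints_map_edge: "endpoints (map_edge f e) = f ` endpoints e"
  by (auto simp: map_edge_def endpoints_def split: prod.splits)

lemma polyline_map_edge:
  assumes "linear L"
  shows "polyline (map_edge (\<lambda>x. c + L x) e) = (\<lambda>x. c + L x) ` polyline e"
proof -
  have "closed_segment (c + L a) (c + L b) = (\<lambda>x. c + L x) ` closed_segment a b" for a b
    by (simp add: closed_segment_translation closed_segment_linear_image[OF assms] image_image)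
  then show ?thesis
    by (simp add: map_edge_def polyline_def image_Un split: prod.splits)
qed

lemma polyline_map_edge_linear: "linear L \<Longrightarrow> polyline (map_edge L e) = L ` polyline e"
  using polyline_map_edge[of L 0] by simp

lemma one_bend_drawing_linear_image:
  assumes "linear f" "inj f" and drawing: "one_bend_drawing P E"
  shows "one_bend_drawing (f ` P) (map_edge f ` E)"
proof -
  have [simp]: "f ` A \<inter> f ` B = f ` (A \<inter> B)" for A B
    using \<open>inj f\<close> by (simp add: image_Int)
  have [simp]: "map_edge f e = map_edge f e' \<longleftrightarrow> e = e'" for e e'
    using inj_map_edge[OF \<open>inj f\<close>] by (simp add: inj_eq)
  show ?thesis
    using drawing unfolding one_bend_drawing_def
    by (auto simp: endpoints_map_edge polyline_map_edge_linear[OF \<open>linear f\<close>] image_mono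
             simp del: image_Int_subset)
qed

lemma bend_edge_isosceles:
  fixes m w h :: point
  assumes "w \<bullet> h = 0" "w \<noteq> 0" "h \<noteq> 0"
  shows "bend_edge (arccos ((norm h ^ 2 - norm w ^ 2) / (norm h ^ 2 + norm w ^ 2)))
           (m - w, m + h, m + w)"
proof -
  have legs: "(m - w) - (m + h) = - (w + h)" "(m + w) - (m + h) = w - h"
    by (simp_all add: algebra_simps)
  have sum_sq: "norm (w + h) ^ 2 = norm w ^ 2 + norm h ^ 2" "norm (w - h) ^ 2 = norm w ^ 2 + norm h ^ 2"
    using assms(1) by (simp_all add: power2_norm_eq_inner inner_add inner_diff inner_commute)
  then have "norm (- (w + h)) * norm (w - h) = norm h ^ 2 + norm w ^ 2"
    by (metis norm_minus_cancel norm_ge_zero power2_eq_square power2_eq_imp_eq add.commute)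
  moreover have "- (w + h) \<bullet> (w - h) = norm h ^ 2 - norm w ^ 2"
    using assms(1) by (simp add: power2_norm_eq_inner inner_add inner_diff inner_commute)
  ultimately have angle: "angle_at (m - w) (m + h) (m + w) =
      arccos ((norm h ^ 2 - norm w ^ 2) / (norm h ^ 2 + norm w ^ 2))"
    unfolding angle_at_def legs by simp
  have "\<not> collinear {0, - (w + h), w - h}"
  proof
    assume "collinear {0, - (w + h), w - h}"
    moreover have "- (w + h) \<noteq> 0" "w - h \<noteq> 0"
      using assms sum_sq by (auto simp: add_eq_0_iff)
    ultimately obtain c where "w - h = c *\<^sub>R - (w + h)"
      by (auto simp: collinear_lemma)
    then have "(1 + c) *\<^sub>R w = (1 - c) *\<^sub>R h"
      by (simp add: algebra_simps)
    then have "(1 + c) * (w \<bullet> w) = (1 - c) * (h \<bullet> w)" "(1 + c) * (w \<bullet> h) = (1 - c) * (h \<bullet> h)"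
      by (metis inner_scaleR_left)+
    then have "1 + c = 0" "1 - c = 0"
      using assms by (simp_all add: inner_commute)
    then show False
      by simp
  qed
  then have "\<not> collinear {m - w, m + h, m + w}"
    by (subst collinear_3) (simp_all add: legs)
  moreover have "m - w \<noteq> m + w"
    using assms(2)
    by (metis add_left_cancel diff_conv_add_uminus eq_neg_iff_add_eq_0 scaleR_2 scaleR_eq_0_iff
        zero_neq_numeral)
  ultimately show ?thesis
    by (simp add: bend_edge_def angle)
qed

definition trilattice :: "point \<Rightarrow> point" where
  "trilattice p = p$1 *\<^sub>R pt 1 0 + p$2 *\<^sub>R pt (1/2) (sqrt 3 / 2)"

lemma trilattice_nth [simp]:
  "trilattice p $ 1 = p$1 + p$2 / 2" "trilattice p $ 2 = sqrt 3 / 2 * p$2"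
  by (simp_all add: trilattice_def)

lemma linear_trilattice: "linear trilattice"
  by (rule linearI) (simp_all add: point_eq_iff algebra_simps)

lemma inj_trilattice: "inj trilattice"
  by (rule injI) (simp add: point_eq_iff)

text \<open>Side \<open>k\<close> of the triangle with corners (0,0), (1,0), (0,1), given as its midpoint
  \<open>m\<close>, half of its direction vector \<open>w\<close>, and an inward vector \<open>n\<close> that \<open>trilattice\<close>
  maps to a normal of the side of length \<open>sqrt 3\<close>.\<close>
definition std_side :: "nat \<Rightarrow> point \<times> point \<times> point" where
  "std_side k = (if k = 0 then (pt (1/2) 0, pt (1/2) 0, pt (-1) 2)
                 else if k = 1 then (pt 0 (1/2), pt 0 (1/2), pt 2 (-1))
                 else (pt (1/2) (1/2), pt (-1/2) (1/2), pt (-1) (-1)))"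

definition std_edge :: "real \<Rightarrow> nat \<Rightarrow> point \<times> point \<times> point" where
  "std_edge q k = (case std_side k of (m, w, n) \<Rightarrow> (m - w, m + q *\<^sub>R n, m + w))"

definition std_corners :: "point set" where
  "std_corners = {pt 0 0, pt 1 0, pt 0 1}"

definition std_triangle :: "point set" where
  "std_triangle = {x. 0 < x$1 \<and> 0 < x$2 \<and> x$1 + x$2 < 1}"

text \<open>The open triangle spanned by side \<open>k\<close> and the centroid (1/3, 1/3).\<close>
definition std_sector :: "nat \<Rightarrow> point set" where
  "std_sector k = (if k = 0 then {x. 0 < x$2 \<and> x$2 < x$1 \<and> x$1 + 2 * x$2 < 1}
                   else if k = 1 then {x. 0 < x$1 \<and> x$1 < x$2 \<and> 2 * x$1 + x$2 < 1}
                   else {x. x$1 + x$2 < 1 \<and> 1 < x$1 + 2 * x$2 \<and> 1 < 2 * x$1 + x$2})"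

lemma std_side_trilattice:
  assumes "k < 3" "std_side k = (m, w, n)"
  shows "trilattice w \<bullet> trilattice n = 0" "norm (trilattice w) ^ 2 = 1/4"
    "norm (trilattice n) ^ 2 = 3"
proof -
  have "k = 0 \<or> k = 1 \<or> k = 2"
    using assms(1) by auto
  then show "trilattice w \<bullet> trilattice n = 0" "norm (trilattice w) ^ 2 = 1/4"
    "norm (trilattice n) ^ 2 = 3"
    using assms(2) unfolding power2_norm_eq_inner inner_point
    by (auto simp: std_side_def power2_eq_square field_simps)
qed

lemma endpoints_std_edge: "k < 3 \<Longrightarrow> endpoints (std_edge q k) \<subseteq> std_corners"
  by (auto simp: std_edge_def std_side_def std_corners_def endpoints_def less_Suc_eq point_eq_iff)

lemma std_corners_triangle_disjoint: "std_corners \<inter> std_triangle = {}"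
  by (auto simp: std_corners_def std_triangle_def)

lemma std_sector_subset_triangle: "std_sector k \<subseteq> std_triangle"
  by (auto simp: std_sector_def std_triangle_def)

lemma std_sectors_disjoint:
  "x \<in> std_sector k \<Longrightarrow> x \<in> std_sector k' \<Longrightarrow> k < 3 \<Longrightarrow> k' < 3 \<Longrightarrow> k = k'"
  by (auto simp: std_sector_def split: if_splits)

text \<open>This is where \<open>q < 1/6\<close>, i.e. an angle above \<open>2 pi / 3\<close>, is needed.\<close>
lemma std_bend_in_sector:
  assumes "0 < q" "q < 1/6" "k < 3"
  shows "fst (snd (std_edge q k)) \<in> std_sector k"
  using assms by (auto simp: std_edge_def std_side_def std_sector_def less_Suc_eq)

lemma std_edge_interior_in_sector:
  assumes "0 < q" "q < 1/6" "k < 3"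
    and "x \<in> polyline (std_edge q k)" "x \<notin> endpoints (std_edge q k)"
  shows "x \<in> std_sector k"
proof -
  define m w n where "m = fst (std_side k)" and "w = fst (snd (std_side k))"
    and "n = snd (snd (std_side k))"
  then have edge: "std_edge q k = (m - w, m + q *\<^sub>R n, m + w)"
    by (simp add: std_edge_def split: prod.splits)
  obtain s where s: "s = -1 \<or> s = 1" "x \<in> closed_segment (m + s *\<^sub>R w) (m + q *\<^sub>R n)"
      "x \<noteq> m + s *\<^sub>R w"
  proof -
    have "x \<in> closed_segment (m - w) (m + q *\<^sub>R n) \<and> x \<noteq> m - w \<or>
          x \<in> closed_segment (m + w) (m + q *\<^sub>R n) \<and> x \<noteq> m + w"
      using assms(4,5) by (auto simp: edge polyline_def endpoints_def closed_segment_commute)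
    then show ?thesis
      using that[of "-1"] that[of 1] by auto
  qed
  then obtain u where u: "0 < u" "u \<le> 1" "x = (1 - u) *\<^sub>R (m + s *\<^sub>R w) + u *\<^sub>R (m + q *\<^sub>R n)"
    by (auto simp: in_segment(1) less_eq_real_def)
  define v where "v = q * u"
  have v: "0 < v" "6 * v < u" "6 * v < 1"
  proof -
    show "0 < v" "6 * v < u"
      using u(1) assms(1,2) by (simp_all add: v_def)
    have "v \<le> q"
      using mult_right_le_one_le[of q u] u(1,2) assms(1) by (simp add: v_def)
    then show "6 * v < 1"
      using assms(2) by linarith
  qed
  have x: "x$1 = m$1 + (1 - u) * s * w$1 + v * n$1" "x$2 = m$2 + (1 - u) * s * w$2 + v * n$2"
    unfolding u(3) v_def by (simp_all add: algebra_simps)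
  have "k = 0 \<or> k = 1 \<or> k = 2"
    using assms(3) by auto
  then show ?thesis
    using v x s(1) u(2) unfolding m_def w_def n_def
    by (elim disjE) (auto simp: std_side_def std_sector_def diff_divide_distrib)
qed

text \<open>The lattice triangle \<open>(i, j, False)\<close> has corners (i, j), (i + 1, j), (i, j + 1); the
  triangle \<open>(i, j, True)\<close> is its point reflection, with corners (i + 1, j + 1), (i, j + 1),
  (i + 1, j).\<close>
type_synonym cell = "nat \<times> nat \<times> bool"

fun cell_map :: "cell \<Rightarrow> point \<Rightarrow> point" where
  "cell_map (i, j, False) x = pt (real i) (real j) + x"
| "cell_map (i, j, True) x = pt (real i + 1) (real j + 1) - x"

lemma cell_map_affine:
  obtains c s where "\<bar>s\<bar> = 1" "cell_map t = (\<lambda>x. c + s *\<^sub>R x)"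
proof -
  obtain i j up where t: "t = (i, j, up)"
    by (cases t) auto
  show ?thesis
  proof (cases up)
    case True
    then show ?thesis
      using that[where c = "pt (real i + 1) (real j + 1)" and s = "-1"] by (simp add: t fun_eq_iff)
  next
    case False
    then show ?thesis
      using that[where c = "pt (real i) (real j)" and s = 1] by (simp add: t fun_eq_iff)
  qed
qed

lemma inj_cell_map: "inj (cell_map t)"
  by (rule cell_map_affine[of t]) (auto simp: inj_def)

lemma cell_map_triangle_bounds:
  assumes "x \<in> std_triangle"
  shows "real i < cell_map (i, j, up) x $ 1" "cell_map (i, j, up) x $ 1 < real i + 1"
    "real j < cell_map (i, j, up) x $ 2" "cell_map (i, j, up) x $ 2 < real j + 1"
    "up \<longleftrightarrow> real i + real j + 1 < cell_map (i, j, up) x $ 1 + cell_map (i, j, up) x $ 2"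
  using assms by (cases up; simp add: std_triangle_def)+

lemma cell_map_triangle_inj:
  assumes "x \<in> std_triangle" "x' \<in> std_triangle" and eq: "cell_map t x = cell_map t' x'"
  shows "t = t'" "x = x'"
proof -
  obtain i j up i' j' up' where t: "t = (i, j, up)" "t' = (i', j', up')"
    by (cases t, cases t') auto
  have eq': "cell_map (i, j, up) x = cell_map (i', j', up') x'"
    using eq by (simp add: t)
  note b = cell_map_triangle_bounds[OF assms(1), where i = i and j = j and up = up]
  note b' = cell_map_triangle_bounds[OF assms(2), where i = i' and j = j' and up = up', folded eq']
  have "\<lfloor>cell_map (i, j, up) x $ 1\<rfloor> = int i" "\<lfloor>cell_map (i, j, up) x $ 1\<rfloor> = int i'"
    "\<lfloor>cell_map (i, j, up) x $ 2\<rfloor> = int j" "\<lfloor>cell_map (i, j, up) x $ 2\<rfloor> = int j'"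
    using b b' by (simp_all add: floor_eq_iff)
  then show "t = t'"
    using b(5) b'(5) by (simp add: t)
  then show "x = x'"
    using eq inj_cell_map by (simp add: inj_eq)
qed

lemma cell_map_triangle_not_Ints:
  assumes "x \<in> std_triangle"
  shows "cell_map t x $ 1 \<notin> \<int>"
proof
  obtain i j up where t: "t = (i, j, up)"
    by (cases t) auto
  assume "cell_map t x $ 1 \<in> \<int>"
  then obtain z where "cell_map t x $ 1 = of_int z"
    by (auto elim: Ints_cases)
  then have "int i < z" "z < int i + 1"
    using cell_map_triangle_bounds(1,2)[OF assms, where i = i and j = j and up = up]
    by (simp_all add: t)
  then show False
    by simp
qed

definition cell_edge :: "real \<Rightarrow> cell \<Rightarrow> nat \<Rightarrow> point \<times> point \<times> point" where
  "cell_edge q t k = map_edge (cell_map t) (std_edge q k)"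

lemma polyline_cell_edge: "polyline (cell_edge q t k) = cell_map t ` polyline (std_edge q k)"
  by (rule cell_map_affine[of t]) (simp add: cell_edge_def polyline_map_edge linear_scaleR)

lemma endpoints_cell_edge: "endpoints (cell_edge q t k) = cell_map t ` endpoints (std_edge q k)"
  by (simp add: cell_edge_def endpoints_map_edge)

lemma cell_edge_interior:
  assumes "0 < q" "q < 1/6" "k < 3"
    and "p \<in> polyline (cell_edge q t k)" "p \<notin> endpoints (cell_edge q t k)"
  obtains x where "x \<in> std_sector k" "p = cell_map t x"
  using assms std_edge_interior_in_sector[OF assms(1-3)]
  by (auto simp: polyline_cell_edge endpoints_cell_edge)

lemma cell_edge_interiors_disjoint:
  assumes "0 < q" "q < 1/6" "k < 3" "k' < 3"
    and "p \<in> polyline (cell_edge q t k)" "p \<notin> endpoints (cell_edge q t k)"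
    and "p \<in> polyline (cell_edge q t' k')" "p \<notin> endpoints (cell_edge q t' k')"
  shows "t = t'" "k = k'"
proof -
  obtain x x' where x: "x \<in> std_sector k" "p = cell_map t x"
    and x': "x' \<in> std_sector k'" "p = cell_map t' x'"
    using cell_edge_interior[OF assms(1-3,5,6)] cell_edge_interior[OF assms(1,2,4,7,8)] by metis
  have "x \<in> std_triangle" "x' \<in> std_triangle"
    using x(1) x'(1) std_sector_subset_triangle by blast+
  with x(2) x'(2) have "t = t'" "x = x'"
    using cell_map_triangle_inj by metis+
  then show "t = t'" "k = k'"
    using x(1) x'(1) assms(3,4) std_sectors_disjoint by blast+
qed

lemma cell_edge_bend_interior:
  assumes "0 < q" "q < 1/6" "k < 3"
  shows "fst (snd (cell_edge q t k)) \<in> polyline (cell_edge q t k) - endpoints (cell_edge q t k)"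
proof -
  let ?b = "fst (snd (std_edge q k))"
  have "?b \<in> std_triangle"
    using std_bend_in_sector[OF assms] std_sector_subset_triangle by blast
  then have "?b \<notin> endpoints (std_edge q k)"
    using endpoints_std_edge[OF assms(3)] std_corners_triangle_disjoint by blast
  moreover have "?b \<in> polyline (std_edge q k)"
    by (auto simp: polyline_def split: prod.splits)
  moreover have "fst (snd (cell_edge q t k)) = cell_map t ?b"
    by (simp add: cell_edge_def map_edge_def split: prod.splits)
  ultimately show ?thesis
    using inj_cell_map by (auto simp: polyline_cell_edge endpoints_cell_edge inj_image_mem_iff)
qed

definition cell_edges :: "real \<Rightarrow> cell set \<Rightarrow> (point \<times> point \<times> point) set" where
  "cell_edges q T = (\<lambda>(t, k). cell_edge q t k) ` (T \<times> {..<3})"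

lemma mem_cell_edges: "e \<in> cell_edges q T \<longleftrightarrow> (\<exists>t\<in>T. \<exists>k<3. e = cell_edge q t k)"
  by (auto simp: cell_edges_def)

lemma card_cell_edges:
  assumes "0 < q" "q < 1/6" "finite T"
  shows "card (cell_edges q T) = 3 * card T"
proof -
  have "x = y" if x: "x \<in> T \<times> {..<3}" and y: "y \<in> T \<times> {..<3}"
    and eq: "case_prod (cell_edge q) x = case_prod (cell_edge q) y" for x y
  proof -
    obtain t k t' k' where xy: "x = (t, k)" "y = (t', k')" and k: "k < 3" "k' < 3"
      using x y by (metis SigmaE lessThan_iff)
    let ?b = "fst (snd (cell_edge q t k))"
    have "?b \<in> polyline (cell_edge q t k) - endpoints (cell_edge q t k)"
      by (rule cell_edge_bend_interior[OF assms(1,2) k(1)])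
    moreover have "?b \<in> polyline (cell_edge q t' k') - endpoints (cell_edge q t' k')"
      using calculation eq by (simp add: xy)
    ultimately show "x = y"
      using cell_edge_interiors_disjoint[OF assms(1,2) k, of ?b t t'] xy by blast
  qed
  then have "inj_on (case_prod (cell_edge q)) (T \<times> {..<3})"
    by (rule inj_onI)
  then show ?thesis
    using assms(3) by (simp add: cell_edges_def card_image card_cartesian_product)
qed

lemma one_bend_drawing_cell_edges:
  assumes "0 < q" "q < 1/6" "finite V" "finite T"
    and V: "V \<subseteq> {p. p$1 \<in> \<int> \<and> p$2 \<in> \<int>}"
    and corners: "\<And>t. t \<in> T \<Longrightarrow> cell_map t ` std_corners \<subseteq> V"
  shows "one_bend_drawing V (cell_edges q T)"
proof -
  have ends: "endpoints e \<subseteq> V" if "e \<in> cell_edges q T" for e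
    using that corners endpoints_std_edge
    by (fastforce simp: mem_cell_edges endpoints_cell_edge)
  have avoids: "p \<in> endpoints e" if e: "e \<in> cell_edges q T" and p: "p \<in> polyline e" "p \<in> V"
    for e p
  proof (rule ccontr)
    obtain t k where k: "k < 3" and e_def: "e = cell_edge q t k"
      using e unfolding mem_cell_edges by blast
    assume "p \<notin> endpoints e"
    then obtain x where "x \<in> std_sector k" "p = cell_map t x"
      using cell_edge_interior[OF assms(1,2) k, of p t] p(1) e_def by blast
    then show False
      using cell_map_triangle_not_Ints std_sector_subset_triangle p(2) V by blast
  qed
  have crossing: "p \<in> endpoints e \<inter> endpoints e'"
    if e: "e \<in> cell_edges q T" "e' \<in> cell_edges q T" "e \<noteq> e'"
    and p: "p \<in> polyline e" "p \<in> polyline e'" for e e' p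
  proof (cases "p \<in> endpoints e \<or> p \<in> endpoints e'")
    case True
    then show ?thesis
      using e p ends avoids by blast
  next
    case False
    obtain t k t' k' where k: "k < 3" "k' < 3"
      and ee': "e = cell_edge q t k" "e' = cell_edge q t' k'"
      using e(1,2) unfolding mem_cell_edges by blast
    then have "t = t'" "k = k'"
      using cell_edge_interiors_disjoint[OF assms(1,2) k, of p t t'] p False by auto
    then show ?thesis
      using e(3) ee' by simp
  qed
  have "finite (cell_edges q T)"
    using assms(4) by (simp add: cell_edges_def)
  then show ?thesis
    unfolding one_bend_drawing_def using assms(3) ends avoids crossing by blast
qed

text \<open>In the plane the bend point lies at height \<open>sqrt 3 * q\<close> above the midpoint of a side
  of length 1.\<close>
lemma bend_edge_cell_edge:
  assumes "0 < q" "k < 3"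
  shows "bend_edge (arccos ((3 * q^2 - 1/4) / (3 * q^2 + 1/4)))
           (map_edge trilattice (cell_edge q t k))"
proof -
  obtain c s where s: "\<bar>s\<bar> = 1" "cell_map t = (\<lambda>x. c + s *\<^sub>R x)"
    by (rule cell_map_affine)
  obtain m w n where side: "std_side k = (m, w, n)"
    by (cases "std_side k") auto
  note lengths = std_side_trilattice[OF assms(2) side]
  define W where "W = s *\<^sub>R trilattice w"
  define H where "H = (s * q) *\<^sub>R trilattice n"
  define M where "M = trilattice (cell_map t m)"
  have edge: "map_edge trilattice (cell_edge q t k) = (M - W, M + H, M + W)"
    using linear_trilattice
    by (simp add: cell_edge_def std_edge_def side map_edge_def s(2) M_def W_def H_def
        linear_add linear_diff linear_cmul algebra_simps)
  have "s^2 = 1"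
    using s(1) by (metis one_power2 power2_abs)
  then have WH: "W \<bullet> H = 0" "norm W ^ 2 = 1/4" "norm H ^ 2 = 3 * q^2"
    using lengths by (simp_all add: W_def H_def power_mult_distrib)
  moreover have "W \<noteq> 0" "H \<noteq> 0"
    using WH(2,3) assms(1) by auto
  ultimately have "bend_edge (arccos ((norm H ^ 2 - norm W ^ 2) / (norm H ^ 2 + norm W ^ 2)))
      (M - W, M + H, M + W)"
    using bend_edge_isosceles by blast
  then show ?thesis
    unfolding edge WH(2,3) .
qed

definition grid :: "nat \<Rightarrow> point set" where
  "grid m = (\<lambda>(i, j). pt (real i) (real j)) ` ({..<m} \<times> {..<m})"

definition padded_grid :: "nat \<Rightarrow> nat \<Rightarrow> point set" where
  "padded_grid m r = grid m \<union> (\<lambda>l. pt (real (m + l)) 0) ` {..<r}"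

lemma finite_padded_grid: "finite (padded_grid m r)"
  by (simp add: padded_grid_def grid_def)

lemma card_padded_grid: "card (padded_grid m r) = m * m + r"
proof -
  have "card (grid m) = m * m"
    unfolding grid_def
    by (subst card_image) (auto simp: inj_on_def point_eq_iff card_cartesian_product)
  moreover have "card ((\<lambda>l. pt (real (m + l)) 0) ` {..<r}) = r"
    by (subst card_image) (auto simp: inj_on_def point_eq_iff)
  moreover have "grid m \<inter> (\<lambda>l. pt (real (m + l)) 0) ` {..<r} = {}"
    by (auto simp: grid_def point_eq_iff)
  ultimately show ?thesis
    by (simp add: padded_grid_def grid_def card_Un_disjoint)
qed

lemma padded_grid_Ints: "padded_grid m r \<subseteq> {p. p$1 \<in> \<int> \<and> p$2 \<in> \<int>}"
  by (auto simp: padded_grid_def grid_def)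

definition grid_cells :: "nat \<Rightarrow> cell set" where
  "grid_cells m = {..<m - 1} \<times> {..<m - 1} \<times> UNIV"

lemma finite_grid_cells: "finite (grid_cells m)"
  by (simp add: grid_cells_def)

lemma card_grid_cells: "card (grid_cells m) = 2 * (m - 1) ^ 2"
  by (simp add: grid_cells_def card_cartesian_product power2_eq_square)

lemma cell_corners:
  "cell_map (i, j, False) ` std_corners =
     {pt (real i) (real j), pt (real (Suc i)) (real j), pt (real i) (real (Suc j))}"
  "cell_map (i, j, True) ` std_corners =
     {pt (real (Suc i)) (real (Suc j)), pt (real i) (real (Suc j)), pt (real (Suc i)) (real j)}"
  by (auto simp: std_corners_def point_eq_iff)

lemma grid_cell_corners:
  assumes "t \<in> grid_cells m"
  shows "cell_map t ` std_corners \<subseteq> grid m"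
proof -
  obtain i j up where t: "t = (i, j, up)" "Suc i < m" "Suc j < m"
    using assms by (auto simp: grid_cells_def)
  have in_grid: "pt (real a) (real b) \<in> grid m" if "a < m" "b < m" for a b
    using that unfolding grid_def by force
  show ?thesis
    using t(2,3) in_grid[of i j] in_grid[of "Suc i" j] in_grid[of i "Suc j"]
      in_grid[of "Suc i" "Suc j"]
    unfolding t(1) by (cases up) (simp_all del: cell_map.simps add: cell_corners)
qed

lemma exists_bend_parameter:
  assumes "2 * pi / 3 < \<alpha>" "\<alpha> < pi"
  obtains q where "0 < q" "q < 1/6" "\<alpha> = arccos ((3 * q^2 - 1/4) / (3 * q^2 + 1/4))"
proof -
  have "0 \<le> \<alpha>"
    using assms(1) pi_gt_zero by linarith
  then have "cos \<alpha> < cos (2 * pi / 3)" "cos pi < cos \<alpha>"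
    using assms by (subst cos_mono_less_eq; simp)+
  then have c: "-1 < cos \<alpha>" "cos \<alpha> < -1/2"
    by (simp_all add: cos_120)
  define q where "q = sqrt ((1 + cos \<alpha>) / (12 * (1 - cos \<alpha>)))"
  have q2: "q^2 = (1 + cos \<alpha>) / (12 * (1 - cos \<alpha>))"
    using c by (simp add: q_def)
  have "q^2 < (1/6)^2"
    using c unfolding q2 by (simp add: field_simps)
  moreover have "0 < q"
    using c by (simp add: q_def)
  ultimately have "q < 1/6"
    using power_less_imp_less_base[of q 2 "1/6"] by simp
  moreover have "(3 * q^2 - 1/4) / (3 * q^2 + 1/4) = cos \<alpha>"
    using c unfolding q2 by (simp add: field_simps)
  then have "\<alpha> = arccos ((3 * q^2 - 1/4) / (3 * q^2 + 1/4))"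
    using assms pi_gt_zero by (simp add: arccos_cos)
  ultimately show ?thesis
    using that \<open>0 < q\<close> by blast
qed

lemma floor_sqrt_square_bound:
  fixes n :: nat
  shows "6 * real n - 24 * sqrt (real n) \<le> 6 * real ((nat \<lfloor>sqrt (real n)\<rfloor> - 1) ^ 2)"
proof (cases "sqrt (real n) < 2")
  case True
  have "6 * real n - 24 * sqrt (real n) = 6 * sqrt (real n) * (sqrt (real n) - 4)"
    by (simp add: algebra_simps flip: power2_eq_square)
  also have "\<dots> \<le> 0"
    using True by (simp add: mult_nonneg_nonpos)
  finally show ?thesis
    by (smt (verit) of_nat_0_le_iff)
next
  case False
  define m where "m = nat \<lfloor>sqrt (real n)\<rfloor>"
  have "sqrt (real n) < real m + 1"
    unfolding m_def using False by linarith
  moreover from this have "1 \<le> m"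
    using False by linarith
  ultimately have "(sqrt (real n) - 2)^2 \<le> real (m - 1) ^ 2"
    using False by (intro power_mono) (simp_all add: of_nat_diff)
  then show ?thesis
    by (simp add: m_def power2_diff algebra_simps)
qed

lemma alpha_bend_multigraph_lattice:
  assumes "0 < q" "q < 1/6"
  shows "alpha_bend_multigraph (arccos ((3 * q^2 - 1/4) / (3 * q^2 + 1/4)))
           (trilattice ` padded_grid m r) (map_edge trilattice ` cell_edges q (grid_cells m))"
proof -
  have "cell_map t ` std_corners \<subseteq> padded_grid m r" if "t \<in> grid_cells m" for t
    using grid_cell_corners[OF that] by (auto simp: padded_grid_def)
  then have "one_bend_drawing (padded_grid m r) (cell_edges q (grid_cells m))"
    by (rule one_bend_drawing_cell_edges[OF assms finite_padded_grid finite_grid_cells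
          padded_grid_Ints])
  then show ?thesis
    using bend_edge_cell_edge[OF assms(1)] linear_trilattice inj_trilattice
    by (auto simp: alpha_bend_multigraph_iff one_bend_drawing_linear_image mem_cell_edges)
qed

lemma card_lattice_vertices: "card (trilattice ` padded_grid m r) = m * m + r"
  using inj_trilattice by (simp add: card_image inj_on_subset card_padded_grid)

lemma card_lattice_edges:
  assumes "0 < q" "q < 1/6"
  shows "card (map_edge trilattice ` cell_edges q (grid_cells m)) = 6 * (m - 1) ^ 2"
  using assms inj_map_edge[OF inj_trilattice]
  by (simp add: card_image inj_on_subset card_cell_edges finite_grid_cells card_grid_cells)

theorem proposition12:
  fixes \<alpha> :: real
  assumes "2 * pi / 3 < \<alpha>" and "\<alpha> < pi"
  shows "\<exists>c::real. c > 0 \<and> (\<forall>n::nat. n \<ge> 1 \<longrightarrow>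
           (\<exists>P E. card P = n \<and> alpha_bend_multigraph \<alpha> P E \<and>
                  real (card E) \<ge> 6 * real n - c * sqrt (real n)))"
proof -
  obtain q where q: "0 < q" "q < 1/6" and \<alpha>: "\<alpha> = arccos ((3 * q^2 - 1/4) / (3 * q^2 + 1/4))"
    using exists_bend_parameter[OF assms] .
  have "\<exists>P E. card P = n \<and> alpha_bend_multigraph \<alpha> P E \<and>
      6 * real n - 24 * sqrt (real n) \<le> real (card E)" for n
  proof -
    define m where "m = nat \<lfloor>sqrt (real n)\<rfloor>"
    have "real (m * m) \<le> sqrt (real n) * sqrt (real n)"
      unfolding m_def of_nat_mult by (intro mult_mono of_nat_floor) simp_all
    then have "m * m \<le> n"
      by (simp only: real_sqrt_mult_self abs_of_nat of_nat_le_iff)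
    then have "card (trilattice ` padded_grid m (n - m * m)) = n"
      by (simp add: card_lattice_vertices)
    moreover have "6 * real n - 24 * sqrt (real n) \<le>
        real (card (map_edge trilattice ` cell_edges q (grid_cells m)))"
      using floor_sqrt_square_bound[of n] by (simp add: card_lattice_edges[OF q] m_def)
    ultimately show ?thesis
      using alpha_bend_multigraph_lattice[OF q] unfolding \<alpha> by blast
  qed
  then show ?thesis
    by (intro exI[of _ 24]) auto
qed

end
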